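(* Let $n\geq2$ and let $S=(n,\phi,F)$ be a semicoherent system whose lifetime distribution has no ties. (i) If $q_i(A)>0$ for every $i\in[n]$ and every $A\subseteq[n]\setminus\{i\}$, then $H(\mathbf{I}_{\mathrm{BP}})=0$ if and only if there is $j\in[n]$ with $\phi(\mathbf{x})=x_j$ for all $\mathbf{x}$. (ii) If $q(A)>0$ for every $A\subseteq[n]$, then $H(\mathbf{p})=0$ if and only if there is $k\in[n]$ with $\phi(\mathbf{x})=x_{k:n}$ for all $\mathbf{x}$ (the $k$th smallest coordinate of $\mathbf{x}$, i.e., a $k$-out-of-$n$ system).
   Context: Semicoherent system $S=(n,\phi,F)$: $\phi:\{0,1\}^n\to\{0,1\}$ nondecreasing with $\phi(0,\ldots,0)=0$, $\phi(1,\ldots,1)=1$ (Boolean vectors identified with subsets of $[n]$); $F$ is the joint c.d.f. of nonnegative lifetimes $X_1,\ldots,X_n$ with $\Pr(X_i=X_k)=0$ for $i\neq k$. System lifetime $T=\inf\{t\geq0:\phi(\{i:X_i>t\})=0\}$. $\mathbf{I}_{\mathrm{BP}}=(I_{\mathrm{BP}}^{(1)},\ldots,I_{\mathrm{BP}}^{(n)})$ with $I_{\mathrm{BP}}^{(j)}=\Pr(T=X_j)$; signature $\mathbf{p}=(p_1,\ldots,p_n)$ with $p_k=\Pr(T=X_{k:n})$, $X_{k:n}$ the $k$th smallest lifetime. $q_j(A)=\Pr\big(\max_{i\notin A\cup\{j\}}X_i<X_j<\min_{i\in A}X_i\big)$ for $A\subseteq[n]\setminus\{j\}$; $q(A)=\Pr\big(\max_{i\notin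 A}X_i<\min_{i\in A}X_i\big)$ (empty max $=-\infty$, empty min $=+\infty$). For a probability vector $\mathbf{w}$ on $[n]$, $H(\mathbf{w})=-\frac{1}{\ln n}\sum_{i=1}^n w_i\ln w_i$ with $0\ln0=0$. *)

theory Defs
  imports "HOL-Probability.Probability"
begin

text \<open>Components are indexed by [n] = {1..n}; Boolean vectors are identified
with subsets of {1..n} (the set of coordinates equal to 1).\<close>

definition semicoherent :: "nat \<Rightarrow> (nat set \<Rightarrow> bool) \<Rightarrow> bool" where
  "semicoherent n \<phi> \<longleftrightarrow>
     (\<forall>A B. A \<subseteq> B \<and> B \<subseteq> {1..n} \<and> \<phi> A \<longrightarrow> \<phi> B) \<and> \<not> \<phi> {} \<and> \<phi> {1..n}"

definition ord_stat :: "nat \<Rightarrow> nat \<Rightarrow> (nat \<Rightarrow> real) \<Rightarrow> real" where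
  "ord_stat n k x = sort (map x [1..<n+1]) ! (k - 1)"

definition lifetimes :: "'a measure \<Rightarrow> nat \<Rightarrow> (nat \<Rightarrow> 'a \<Rightarrow> real) \<Rightarrow> bool" where
  "lifetimes M n X \<longleftrightarrow> prob_space M \<and>
     (\<forall>i\<in>{1..n}. X i \<in> borel_measurable M \<and> (\<forall>\<omega>\<in>space M. 0 \<le> X i \<omega>)) \<and>
     (\<forall>i\<in>{1..n}. \<forall>k\<in>{1..n}. i \<noteq> k \<longrightarrow> measure M {\<omega>\<in>space M. X i \<omega> = X k \<omega>} = 0)"

definition sys_lifetime :: "nat \<Rightarrow> (nat set \<Rightarrow> bool) \<Rightarrow> (nat \<Rightarrow> 'a \<Rightarrow> real) \<Rightarrow> 'a \<Rightarrow> real" where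
  "sys_lifetime n \<phi> X \<omega> = Inf {t. 0 \<le> t \<and> \<not> \<phi> {i\<in>{1..n}. X i \<omega> > t}}"

definition I_BP :: "'a measure \<Rightarrow> nat \<Rightarrow> (nat set \<Rightarrow> bool) \<Rightarrow> (nat \<Rightarrow> 'a \<Rightarrow> real) \<Rightarrow> nat \<Rightarrow> real" where
  "I_BP M n \<phi> X j = measure M {\<omega>\<in>space M. sys_lifetime n \<phi> X \<omega> = X j \<omega>}"

definition signature :: "'a measure \<Rightarrow> nat \<Rightarrow> (nat set \<Rightarrow> bool) \<Rightarrow> (nat \<Rightarrow> 'a \<Rightarrow> real) \<Rightarrow> nat \<Rightarrow> real" where
  "signature M n \<phi> X k =
     measure M {\<omega>\<in>space M. sys_lifetime n \<phi> X \<omega> = ord_stat n k (\<lambda>i. X i \<omega>)}"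

text \<open>q_j(A) = Pr(max_{i notin A u {j}} X_i < X_j < min_{i in A} X_i), with
empty max = -inf and empty min = +inf.\<close>
definition q_j :: "'a measure \<Rightarrow> nat \<Rightarrow> (nat \<Rightarrow> 'a \<Rightarrow> real) \<Rightarrow> nat \<Rightarrow> nat set \<Rightarrow> real" where
  "q_j M n X j A = measure M {\<omega>\<in>space M.
      (\<forall>i\<in>{1..n} - (A \<union> {j}). X i \<omega> < X j \<omega>) \<and> (\<forall>i\<in>A. X j \<omega> < X i \<omega>)}"

definition q :: "'a measure \<Rightarrow> nat \<Rightarrow> (nat \<Rightarrow> 'a \<Rightarrow> real) \<Rightarrow> nat set \<Rightarrow> real" where
  "q M n X A = measure M {\<omega>\<in>space M.
      \<forall>i\<in>{1..n} - A. \<forall>l\<in>A. X i \<omega> < X l \<omega>}"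

definition entropy_n :: "nat \<Rightarrow> (nat \<Rightarrow> real) \<Rightarrow> real" where
  "entropy_n n w = - (1 / ln (real n)) * (\<Sum>i\<in>{1..n}. if w i = 0 then 0 else w i * ln (w i))"

end

theory Submission
  imports Defs
begin

text \<open>
  For a semicoherent structure function \<open>\<phi>\<close> the system lifetime is the
  path-set value: the maximum over the path sets \<open>P\<close> of the minimum of the lifetimes in
  \<open>P\<close>.  It is characterised by \<open>T \<le> t \<longleftrightarrow> \<not> \<phi> {i. t < x i}\<close>, which yields two facts:
  the dictator \<open>\<phi>(x) = x\<^sub>j\<close> and the order-statistic system \<open>\<phi>(x) = x\<^sub>k\<^sub>:\<^sub>n\<close> have lifetimes
  \<open>x\<^sub>j\<close> and \<open>x\<^sub>k\<^sub>:\<^sub>n\<close>, and two systems with equal lifetime at a configuration in which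
  exactly the components of \<open>A\<close> outlive all others agree on \<open>A\<close>.

  A normalised entropy vanishes iff the probability vector is a unit vector.  If the
  system is a dictator (resp. an order-statistic system), its lifetime equals one
  candidate surely and, there being no ties, every other candidate almost never.
  Conversely, if one of the events \<open>T = X\<^sub>j\<close> (resp. \<open>T = X\<^sub>k\<^sub>:\<^sub>n\<close>) has probability one, it
  meets every event of positive probability, in particular the ones defining
  \<open>q\<^sub>j(A - {j})\<close> (resp. \<open>q(A)\<close>), on which \<open>A\<close> is exactly the set of longest-lived
  components; hence \<open>\<phi>\<close> agrees with the dictator (resp. order-statistic system) on \<open>A\<close>.
\<close>

lemma entropy_n_zero_iff:
  assumes "n \<ge> 2" and "\<forall>i\<in>{1..n}. 0 \<le> w i \<and> w i \<le> 1"
  shows "entropy_n n w = 0 \<longleftrightarrow> (\<forall>i\<in>{1..n}. w i = 0 \<or> w i = 1)"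
proof -
  define h where "h i = - (if w i = 0 then 0 else w i * ln (w i))" for i
  have ln_pos: "ln (real n) > 0" using assms(1) by simp
  have h_nonneg: "\<forall>i\<in>{1..n}. 0 \<le> h i"
    using assms(2) unfolding h_def by (auto intro!: mult_nonneg_nonpos)
  have h_zero: "h i = 0 \<longleftrightarrow> w i = 0 \<or> w i = 1" if "i \<in> {1..n}" for i
  proof (cases "w i = 0")
    case False
    then have "w i > 0" using assms(2) that by (simp add: order_le_neq_trans)
    then show ?thesis using False unfolding h_def by (simp add: ln_eq_zero_iff)
  qed (simp add: h_def)
  have "entropy_n n w = 0 \<longleftrightarrow> (\<Sum>i\<in>{1..n}. h i) = 0"
    using ln_pos unfolding entropy_n_def h_def by (simp add: sum_negf)
  also have "\<dots> \<longleftrightarrow> (\<forall>i\<in>{1..n}. h i = 0)"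
    using h_nonneg by (intro sum_nonneg_eq_0_iff) auto
  finally show ?thesis using h_zero by simp
qed

lemma sorted_nth_le_iff:
  fixes s :: "'a::linorder list"
  assumes "sorted s" "1 \<le> k" "k \<le> length s"
  shows "s ! (k - 1) \<le> v \<longleftrightarrow> k \<le> length (filter (\<lambda>y. y \<le> v) s)"
proof -
  let ?L = "{i. i < length s \<and> s ! i \<le> v}"
  have count: "length (filter (\<lambda>y. y \<le> v) s) = card ?L"
    by (simp add: length_filter_conv_card)
  show ?thesis
  proof
    assume le: "s ! (k - 1) \<le> v"
    have "{..<k} \<subseteq> ?L"
    proof
      fix i assume "i \<in> {..<k}"
      then have "s ! i \<le> s ! (k - 1)" using sorted_nth_mono[OF assms(1)] assms(3) by auto
      then show "i \<in> ?L" using le \<open>i \<in> {..<k}\<close> assms(3) by auto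
    qed
    then show "k \<le> length (filter (\<lambda>y. y \<le> v) s)"
      unfolding count using card_mono[of ?L "{..<k}"] by simp
  next
    assume k: "k \<le> length (filter (\<lambda>y. y \<le> v) s)"
    show "s ! (k - 1) \<le> v"
    proof (rule ccontr)
      assume gt: "\<not> s ! (k - 1) \<le> v"
      have "?L \<subseteq> {..<k - 1}"
      proof
        fix i assume i: "i \<in> ?L"
        show "i \<in> {..<k - 1}"
        proof (rule ccontr)
          assume "i \<notin> {..<k - 1}"
          then have "s ! (k - 1) \<le> s ! i" using sorted_nth_mono[OF assms(1)] i by auto
          then show False using gt i by auto
        qed
      qed
      then have "card ?L \<le> k - 1" using card_mono[of "{..<k - 1}"] by fastforce
      then show False using k assms(2) unfolding count by simp
    qed
  qed
qed

lemma ord_stat_le_iff: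
  assumes "1 \<le> k" "k \<le> n"
  shows "ord_stat n k x \<le> v \<longleftrightarrow> k \<le> card {i\<in>{1..n}. x i \<le> v}"
proof -
  define s where "s = sort (map x [1..<n+1])"
  have "card {i\<in>{1..n}. x i \<le> v} = card ({i. x i \<le> v} \<inter> set [1..<n+1])"
    by (rule arg_cong[where f=card]) auto
  also have "\<dots> = length (filter (\<lambda>i. x i \<le> v) [1..<n+1])"
    by (rule distinct_length_filter[symmetric]) (simp del: upt_Suc)
  also have "\<dots> = length (filter (\<lambda>y. y \<le> v) s)"
    by (simp add: s_def filter_sort filter_map comp_def del: upt_Suc)
  finally have "card {i\<in>{1..n}. x i \<le> v} = length (filter (\<lambda>y. y \<le> v) s)" .
  moreover have "sorted s" "length s = n" by (simp_all add: s_def)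
  ultimately show ?thesis
    using sorted_nth_le_iff[of s k v] assms unfolding ord_stat_def s_def[symmetric] by simp
qed

lemma ord_stat_image: "(\<lambda>k. ord_stat n k x) ` {1..n} = x ` {1..n}"
proof -
  define s where "s = sort (map x [1..<n+1])"
  have shift: "(\<lambda>k. k - 1) ` {1..n} = {..<n}"
    by (auto simp: image_iff intro!: bexI[where x="Suc _"])
  have "(\<lambda>k. ord_stat n k x) ` {1..n} = (\<lambda>i. s ! i) ` ((\<lambda>k. k - 1) ` {1..n})"
    unfolding ord_stat_def s_def[symmetric] by (simp add: image_image)
  also have "\<dots> = (\<lambda>i. s ! i) ` {..<n}" by (simp only: shift)
  also have "\<dots> = set s" by (simp add: s_def set_conv_nth lessThan_def image_Collect)
  also have "\<dots> = x ` {1..n}" by (simp add: s_def atLeastLessThanSuc_atLeastAtMost del: upt_Suc)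
  finally show ?thesis .
qed

lemma ord_stat_distinct:
  assumes "inj_on x {1..n}" "k \<in> {1..n}" "l \<in> {1..n}" "k \<noteq> l"
  shows "ord_stat n k x \<noteq> ord_stat n l x"
proof -
  define s where "s = sort (map x [1..<n+1])"
  have "distinct (map x [1..<n+1])" using assms(1)
    by (simp add: distinct_map atLeastLessThanSuc_atLeastAtMost del: upt_Suc)
  then have "distinct s" by (simp add: s_def)
  moreover have "length s = n" by (simp add: s_def)
  moreover have "k - 1 < n" "l - 1 < n" "k - 1 \<noteq> l - 1" using assms(2-4) by auto
  ultimately show ?thesis using nth_eq_iff_index_eq[of s "k - 1" "l - 1"]
    unfolding ord_stat_def s_def[symmetric] by auto
qed

lemma ord_stat_indicator:
  assumes "k \<in> {1..n}" "A \<subseteq> {1..n}"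
  shows "ord_stat n k (indicator A) = (if n - card A < k then 1 else 0)"
proof -
  have "ord_stat n k (indicator A) \<in> indicator A ` {1..n}"
    using ord_stat_image[of n "indicator A"] assms(1) by blast
  then have zero_one: "ord_stat n k (indicator A) \<in> {0, 1}" by (auto simp: indicator_def)
  have "{i\<in>{1..n}. (indicator A i :: real) \<le> 0} = {1..n} - A" by (auto simp: indicator_def)
  moreover have "card ({1..n} - A) = n - card A"
    using assms(2) by (simp add: card_Diff_subset finite_subset)
  ultimately have "ord_stat n k (indicator A) \<le> 0 \<longleftrightarrow> k \<le> n - card A"
    using ord_stat_le_iff[of k n "indicator A" 0] assms(1) by simp
  then show ?thesis using zero_one by auto
qed

lemma semicoherent_mono:
  "semicoherent n \<phi> \<Longrightarrow> A \<subseteq> B \<Longrightarrow> B \<subseteq> {1..n} \<Longrightarrow> \<phi> A \<Longrightarrow> \<phi> B"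
  unfolding semicoherent_def by blast

lemma dictator_semicoherent: "j \<in> {1..n} \<Longrightarrow> semicoherent n (\<lambda>A. j \<in> A)"
  unfolding semicoherent_def by auto

text \<open>The structure function \<open>\<phi>(x) = x\<^sub>k\<^sub>:\<^sub>n\<close> on working sets: the system works iff fewer than \<open>k\<close> components have failed.\<close>
definition order_stat_system :: "nat \<Rightarrow> nat \<Rightarrow> nat set \<Rightarrow> bool" where
  "order_stat_system n k A \<longleftrightarrow> n - card A < k"

lemma order_stat_system_semicoherent:
  assumes "k \<in> {1..n}"
  shows "semicoherent n (order_stat_system n k)"
  unfolding semicoherent_def order_stat_system_def
proof (intro conjI allI impI)
  fix A B :: "nat set"
  assume AB: "A \<subseteq> B \<and> B \<subseteq> {1..n} \<and> n - card A < k"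
  then have "card A \<le> card B" by (meson card_mono finite_atLeastAtMost finite_subset)
  with AB show "n - card B < k" by linarith
qed (use assms in simp_all)

definition path_value :: "nat \<Rightarrow> (nat set \<Rightarrow> bool) \<Rightarrow> (nat \<Rightarrow> real) \<Rightarrow> real" where
  "path_value n \<phi> x = Max ((\<lambda>P. Min (x ` P)) ` {P. P \<subseteq> {1..n} \<and> \<phi> P})"

lemma
  assumes "semicoherent n \<phi>"
  shows path_value_le_iff: "path_value n \<phi> x \<le> t \<longleftrightarrow> \<not> \<phi> {i\<in>{1..n}. t < x i}"
    and path_value_component: "\<exists>j\<in>{1..n}. path_value n \<phi> x = x j"
proof -
  let ?Ps = "{P. P \<subseteq> {1..n} \<and> \<phi> P}"
  have fin: "finite ?Ps" by (rule finite_subset[of _ "Pow {1..n}"]) auto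
  have top: "{1..n} \<in> ?Ps" and bot: "{} \<notin> ?Ps"
    using assms unfolding semicoherent_def by auto
  have finP: "finite P" if "P \<in> ?Ps" for P using that finite_subset by auto
  have min_in: "Min (x ` P) \<in> x ` P" if "P \<in> ?Ps" for P
    using that finP[OF that] bot by (intro Min_in) auto
  have "path_value n \<phi> x \<in> (\<lambda>P. Min (x ` P)) ` ?Ps"
    unfolding path_value_def using fin top by (intro Max_in) auto
  then obtain P0 where P0: "P0 \<in> ?Ps" "path_value n \<phi> x = Min (x ` P0)" by blast
  have ge: "Min (x ` P) \<le> path_value n \<phi> x" if "P \<in> ?Ps" for P
    unfolding path_value_def using fin that by (intro Max_ge) auto
  show "\<exists>j\<in>{1..n}. path_value n \<phi> x = x j" using min_in[OF P0(1)] P0 by auto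
  show "path_value n \<phi> x \<le> t \<longleftrightarrow> \<not> \<phi> {i\<in>{1..n}. t < x i}"
  proof
    assume le: "path_value n \<phi> x \<le> t"
    show "\<not> \<phi> {i\<in>{1..n}. t < x i}"
    proof
      assume "\<phi> {i\<in>{1..n}. t < x i}"
      then have Q: "{i\<in>{1..n}. t < x i} \<in> ?Ps" by auto
      then obtain l where "l \<in> {i\<in>{1..n}. t < x i}" "Min (x ` {i\<in>{1..n}. t < x i}) = x l"
        using min_in[OF Q] by blast
      then show False using ge[OF Q] le by simp
    qed
  next
    assume fails: "\<not> \<phi> {i\<in>{1..n}. t < x i}"
    show "path_value n \<phi> x \<le> t"
    proof (rule ccontr)
      assume "\<not> path_value n \<phi> x \<le> t"
      have "P0 \<subseteq> {i\<in>{1..n}. t < x i}"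
      proof
        fix i assume "i \<in> P0"
        then have "path_value n \<phi> x \<le> x i" using P0 finP[OF P0(1)] by simp
        then show "i \<in> {i\<in>{1..n}. t < x i}"
          using \<open>\<not> path_value n \<phi> x \<le> t\<close> P0(1) \<open>i \<in> P0\<close> by auto
      qed
      then have "\<phi> {i\<in>{1..n}. t < x i}"
        by (rule semicoherent_mono[OF assms]) (use P0(1) in auto)
      with fails show False ..
    qed
  qed
qed

lemma path_value_eqI:
  assumes "semicoherent n \<phi>" and "\<And>t. a \<le> t \<longleftrightarrow> \<not> \<phi> {i\<in>{1..n}. t < x i}"
  shows "path_value n \<phi> x = a"
  using path_value_le_iff[OF assms(1)] assms(2) by (meson order_antisym order_refl)

lemma path_value_cong:
  "(\<And>A. A \<subseteq> {1..n} \<Longrightarrow> \<phi> A \<longleftrightarrow> \<psi> A) \<Longrightarrow> path_value n \<phi> x = path_value n \<psi> x"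
  unfolding path_value_def by (metis (mono_tags, lifting) Collect_cong)

lemma path_value_dictator: "j \<in> {1..n} \<Longrightarrow> path_value n (\<lambda>A. j \<in> A) x = x j"
  by (rule path_value_eqI[OF dictator_semicoherent]) auto

lemma path_value_order_stat:
  assumes "k \<in> {1..n}"
  shows "path_value n (order_stat_system n k) x = ord_stat n k x"
proof (rule path_value_eqI[OF order_stat_system_semicoherent[OF assms]])
  fix t
  have "{i\<in>{1..n}. x i \<le> t} = {1..n} - {i\<in>{1..n}. t < x i}" by auto
  moreover have "card ({1..n} - {i\<in>{1..n}. t < x i}) = n - card {i\<in>{1..n}. t < x i}"
    by (subst card_Diff_subset) auto
  ultimately have "card {i\<in>{1..n}. x i \<le> t} = n - card {i\<in>{1..n}. t < x i}" by simp
  moreover have "ord_stat n k x \<le> t \<longleftrightarrow> k \<le> card {i\<in>{1..n}. x i \<le> t}"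
    using assms by (intro ord_stat_le_iff) auto
  ultimately show "ord_stat n k x \<le> t \<longleftrightarrow> \<not> order_stat_system n k {i\<in>{1..n}. t < x i}"
    unfolding order_stat_system_def by linarith
qed

lemma sys_lifetime_eq_path_value:
  assumes "semicoherent n \<phi>" and "\<forall>i\<in>{1..n}. 0 \<le> X i \<omega>"
  shows "sys_lifetime n \<phi> X \<omega> = path_value n \<phi> (\<lambda>i. X i \<omega>)"
proof -
  let ?T = "path_value n \<phi> (\<lambda>i. X i \<omega>)"
  have "0 \<le> ?T" using path_value_component[OF assms(1)] assms(2) by metis
  moreover have "\<not> \<phi> {i\<in>{1..n}. t < X i \<omega>} \<longleftrightarrow> ?T \<le> t" for t
    by (simp add: path_value_le_iff[OF assms(1)])
  ultimately have "{t. 0 \<le> t \<and> \<not> \<phi> {i\<in>{1..n}. t < X i \<omega>}} = {?T..}"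
    by auto
  then show ?thesis unfolding sys_lifetime_def by simp
qed

lemma path_value_measurable:
  assumes "\<And>i. i \<in> {1..n} \<Longrightarrow> X i \<in> borel_measurable M"
  shows "(\<lambda>\<omega>. path_value n \<phi> (\<lambda>i. X i \<omega>)) \<in> borel_measurable M"
  unfolding path_value_def
proof (rule borel_measurable_Max)
  show "finite {P. P \<subseteq> {1..n} \<and> \<phi> P}" by (rule finite_subset[of _ "Pow {1..n}"]) auto
  fix P assume "P \<in> {P. P \<subseteq> {1..n} \<and> \<phi> P}"
  then show "(\<lambda>\<omega>. Min ((\<lambda>i. X i \<omega>) ` P)) \<in> borel_measurable M"
    using assms by (intro borel_measurable_Min) (auto intro: finite_subset)
qed

lemma separating_threshold:
  fixes x :: "nat \<Rightarrow> real"
  assumes "finite S" "finite U" "\<forall>i\<in>S. \<forall>l\<in>U. x i < x l"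
  shows "\<exists>t. (\<forall>i\<in>S. x i \<le> t) \<and> (\<forall>l\<in>U. t < x l)"
proof -
  define t where "t = Max (insert (Min (insert 0 (x ` U)) - 1) (x ` S))"
  have "x i \<le> t" if "i \<in> S" for i unfolding t_def using assms(1) that by simp
  moreover have "t < x l" if "l \<in> U" for l
  proof -
    have "Min (insert 0 (x ` U)) \<le> x l" using assms(2) that by (intro Min_le) auto
    then have "Min (insert 0 (x ` U)) - 1 < x l" by linarith
    moreover have "\<forall>i\<in>S. x i < x l" using assms(3) that by blast
    ultimately show ?thesis unfolding t_def using assms(1) by (subst Max_less_iff) auto
  qed
  ultimately show ?thesis by blast
qed

text \<open>Two systems with equal lifetimes at a configuration in which exactly the components in \<open>A\<close> outlive the others agree on \<open>A\<close>: at a threshold separating the two groups, both lifetime characterisations refer to the working state of \<open>A\<close>.\<close>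
lemma separated_configuration_agree:
  assumes "semicoherent n \<phi>" "semicoherent n \<psi>" "A \<subseteq> {1..n}"
    and "\<forall>i\<in>{1..n} - A. \<forall>l\<in>A. x i < x l"
    and "path_value n \<phi> x = path_value n \<psi> x"
  shows "\<phi> A \<longleftrightarrow> \<psi> A"
proof -
  obtain t where t: "\<forall>i\<in>{1..n} - A. x i \<le> t" "\<forall>l\<in>A. t < x l"
    using separating_threshold[of "{1..n} - A" A x] assms(3,4) finite_subset by blast
  have survivors: "{i\<in>{1..n}. t < x i} = A"
  proof (rule set_eqI)
    fix i
    show "i \<in> {i\<in>{1..n}. t < x i} \<longleftrightarrow> i \<in> A"
      using t assms(3) by (cases "i \<in> A") (auto simp: not_less)
  qed
  have "\<not> \<phi> A \<longleftrightarrow> path_value n \<phi> x \<le> t"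
    using path_value_le_iff[OF assms(1), of x t] unfolding survivors by simp
  moreover have "\<not> \<psi> A \<longleftrightarrow> path_value n \<psi> x \<le> t"
    using path_value_le_iff[OF assms(2), of x t] unfolding survivors by simp
  ultimately have "\<not> \<phi> A \<longleftrightarrow> \<not> \<psi> A" using assms(5) by simp
  then show ?thesis by blast
qed

lemma q_j_event_separated:
  fixes x :: "nat \<Rightarrow> real"
  assumes "\<forall>i\<in>{1..n} - (A - {j} \<union> {j}). x i < x j" and "\<forall>l\<in>A - {j}. x j < x l"
  shows "\<forall>i\<in>{1..n} - A. \<forall>l\<in>A. x i < x l"
proof (intro ballI)
  fix i l assume i: "i \<in> {1..n} - A" and l: "l \<in> A"
  show "x i < x l"
  proof (cases "i = j")
    case True
    then show ?thesis using assms(2) i l by auto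
  next
    case False
    then have "x i < x j" using assms(1) i by auto
    moreover have "l \<noteq> j \<Longrightarrow> x j < x l" using assms(2) l by auto
    ultimately show ?thesis by (cases "l = j") auto
  qed
qed

context prob_space
begin

lemma prob_one_meets_positive:
  assumes "E \<in> events" "prob E = 1" "measure M F > 0"
  shows "E \<inter> F \<noteq> {}"
proof
  assume disjoint: "E \<inter> F = {}"
  have F: "F \<in> events" using assms(3) measure_notin_sets by fastforce
  then have "F \<subseteq> space M - E" using disjoint sets.sets_into_space by blast
  then have "prob F \<le> prob (space M - E)" using assms(1) by (intro finite_measure_mono) auto
  also have "\<dots> = 0" using prob_compl[OF assms(1)] assms(2) by simp
  finally show False using assms(3) by simp
qed

lemma exists_prob_one:
  assumes "finite I" "\<And>i. i \<in> I \<Longrightarrow> B i \<in> events" "space M \<subseteq> (\<Union>i\<in>I. B i)"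
    and "\<forall>i\<in>I. prob (B i) = 0 \<or> prob (B i) = 1"
  shows "\<exists>i\<in>I. prob (B i) = 1"
proof (rule ccontr)
  assume "\<not> ?thesis"
  then have null: "\<forall>i\<in>I. prob (B i) = 0" using assms(4) by auto
  have "1 = prob (space M)" by (simp add: prob_space)
  also have "\<dots> \<le> prob (\<Union>i\<in>I. B i)"
    using assms(1-3) by (intro finite_measure_mono) auto
  also have "\<dots> \<le> (\<Sum>i\<in>I. prob (B i))"
    using assms(1,2) by (intro finite_measure_subadditive_finite) auto
  also have "\<dots> = 0" using null by simp
  finally show False by simp
qed

lemma prob_match_zero_one:
  assumes "k \<in> I" "\<And>\<omega>. \<omega> \<in> space M \<Longrightarrow> T \<omega> = f k \<omega>"
    and "N \<in> events" "prob N = 0" "\<And>\<omega>. \<omega> \<in> space M - N \<Longrightarrow> inj_on (\<lambda>l. f l \<omega>) I"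
    and "\<And>l. l \<in> I \<Longrightarrow> {\<omega>\<in>space M. T \<omega> = f l \<omega>} \<in> events"
  shows "\<forall>l\<in>I. prob {\<omega>\<in>space M. T \<omega> = f l \<omega>} = 0 \<or> prob {\<omega>\<in>space M. T \<omega> = f l \<omega>} = 1"
proof
  fix l assume l: "l \<in> I"
  show "prob {\<omega>\<in>space M. T \<omega> = f l \<omega>} = 0 \<or> prob {\<omega>\<in>space M. T \<omega> = f l \<omega>} = 1"
  proof (cases "l = k")
    case True
    then have "{\<omega>\<in>space M. T \<omega> = f l \<omega>} = space M" using assms(2) by auto
    then show ?thesis by (simp add: prob_space)
  next
    case False
    have "{\<omega>\<in>space M. T \<omega> = f l \<omega>} \<subseteq> N"
    proof
      fix \<omega> assume \<omega>: "\<omega> \<in> {\<omega>\<in>space M. T \<omega> = f l \<omega>}"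
      show "\<omega> \<in> N"
      proof (rule ccontr)
        assume "\<omega> \<notin> N"
        then have "inj_on (\<lambda>l. f l \<omega>) I" using \<omega> assms(5) by blast
        moreover have "f k \<omega> = f l \<omega>" using \<omega> assms(2)[of \<omega>] by simp
        ultimately have "k = l" using assms(1) l by (auto dest: inj_onD)
        then show False using False by simp
      qed
    qed
    then have "prob {\<omega>\<in>space M. T \<omega> = f l \<omega>} \<le> prob N"
      using assms(3) by (intro finite_measure_mono)
    then show ?thesis using assms(4) measure_nonneg[of M] by (metis order_antisym)
  qed
qed

lemma entropy_n_prob_zero_iff:
  assumes "n \<ge> 2"
  shows "entropy_n n (\<lambda>j. prob (B j)) = 0 \<longleftrightarrow> (\<forall>j\<in>{1..n}. prob (B j) = 0 \<or> prob (B j) = 1)"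
  using entropy_n_zero_iff[OF assms] by simp

lemma no_ties_ae:
  fixes n :: nat and X :: "nat \<Rightarrow> 'a \<Rightarrow> real"
  assumes "\<And>i. i \<in> {1..n} \<Longrightarrow> X i \<in> borel_measurable M"
    and "\<And>i k. i \<in> {1..n} \<Longrightarrow> k \<in> {1..n} \<Longrightarrow> i \<noteq> k \<Longrightarrow> prob {\<omega>\<in>space M. X i \<omega> = X k \<omega>} = 0"
  shows "\<exists>N\<in>events. prob N = 0 \<and> (\<forall>\<omega>\<in>space M - N. inj_on (\<lambda>i. X i \<omega>) {1..n})"
proof -
  define Pairs where "Pairs = {p \<in> {1..n} \<times> {1..n}. fst p \<noteq> snd p}"
  define tie where "tie p = {\<omega>\<in>space M. X (fst p) \<omega> = X (snd p) \<omega>}" for p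
  have fin: "finite Pairs" unfolding Pairs_def by simp
  have tie_event: "tie p \<in> events" if "p \<in> Pairs" for p
  proof -
    have "fst p \<in> {1..n}" "snd p \<in> {1..n}" using that unfolding Pairs_def by auto
    then show ?thesis unfolding tie_def by (intro borel_measurable_eq assms(1))
  qed
  have "prob (\<Union>p\<in>Pairs. tie p) \<le> (\<Sum>p\<in>Pairs. prob (tie p))"
    using fin tie_event by (intro finite_measure_subadditive_finite) auto
  also have "\<dots> = 0" using assms(2) unfolding Pairs_def tie_def by (intro sum.neutral) auto
  finally have "prob (\<Union>p\<in>Pairs. tie p) = 0" using measure_nonneg[of M] by (metis order_antisym)
  moreover have "inj_on (\<lambda>i. X i \<omega>) {1..n}" if \<omega>: "\<omega> \<in> space M - (\<Union>p\<in>Pairs. tie p)" for \<omega>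
  proof (rule inj_onI)
    fix a b assume ab: "a \<in> {1..n}" "b \<in> {1..n}" "X a \<omega> = X b \<omega>"
    then have "(a, b) \<notin> Pairs" using \<omega> unfolding tie_def by auto
    with ab show "a = b" unfolding Pairs_def by simp
  qed
  moreover have "(\<Union>p\<in>Pairs. tie p) \<in> events" using fin tie_event by auto
  ultimately show ?thesis by blast
qed

lemma agree_on_separated_set:
  assumes "semicoherent n \<phi>" "semicoherent n \<psi>" "A \<subseteq> {1..n}"
    and "E \<in> events" "prob E = 1"
    and "\<And>\<omega>. \<omega> \<in> E \<Longrightarrow> path_value n \<phi> (\<lambda>i. X i \<omega>) = path_value n \<psi> (\<lambda>i. X i \<omega>)"
    and "measure M F > 0" "\<And>\<omega>. \<omega> \<in> F \<Longrightarrow> \<forall>i\<in>{1..n} - A. \<forall>l\<in>A. X i \<omega> < X l \<omega>"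
  shows "\<phi> A \<longleftrightarrow> \<psi> A"
proof -
  obtain \<omega> where "\<omega> \<in> E" "\<omega> \<in> F" using prob_one_meets_positive[OF assms(4,5,7)] by blast
  then have "\<forall>i\<in>{1..n} - A. \<forall>l\<in>A. X i \<omega> < X l \<omega>"
    and "path_value n \<phi> (\<lambda>i. X i \<omega>) = path_value n \<psi> (\<lambda>i. X i \<omega>)"
    using assms(6,8) by blast+
  then show ?thesis by (rule separated_configuration_agree[OF assms(1-3)])
qed

end

text \<open>Order statistics of random variables are measurable, being lifetimes of order-statistic systems.\<close>
lemma ord_stat_measurable:
  assumes "k \<in> {1..n}" "\<And>i. i \<in> {1..n} \<Longrightarrow> X i \<in> borel_measurable M"
  shows "(\<lambda>\<omega>. ord_stat n k (\<lambda>i. X i \<omega>)) \<in> borel_measurable M"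
proof -
  have "(\<lambda>\<omega>. path_value n (order_stat_system n k) (\<lambda>i. X i \<omega>)) \<in> borel_measurable M"
    by (rule path_value_measurable) (rule assms(2))
  then show ?thesis by (simp add: path_value_order_stat[OF assms(1)])
qed

lemma lifetime_path_value:
  assumes "semicoherent n \<phi>" "lifetimes M n X"
  shows "{\<omega>\<in>space M. sys_lifetime n \<phi> X \<omega> = f \<omega>} = {\<omega>\<in>space M. path_value n \<phi> (\<lambda>i. X i \<omega>) = f \<omega>}"
proof (rule Collect_cong)
  fix \<omega>
  have "sys_lifetime n \<phi> X \<omega> = path_value n \<phi> (\<lambda>i. X i \<omega>)" if "\<omega> \<in> space M"
    using that assms(2) unfolding lifetimes_def by (intro sys_lifetime_eq_path_value[OF assms(1)]) blast
  then show "\<omega> \<in> space M \<and> sys_lifetime n \<phi> X \<omega> = f \<omega> \<longleftrightarrow>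
      \<omega> \<in> space M \<and> path_value n \<phi> (\<lambda>i. X i \<omega>) = f \<omega>" by auto
qed

lemma lifetime_match_event:
  assumes "\<And>i. i \<in> {1..n} \<Longrightarrow> X i \<in> borel_measurable M" and "f \<in> borel_measurable M"
  shows "{\<omega>\<in>space M. path_value n \<phi> (\<lambda>i. X i \<omega>) = f \<omega>} \<in> sets M"
  using path_value_measurable[of n X M \<phi>] assms by (intro borel_measurable_eq) auto

lemma order_stat_system_iff_indicator:
  assumes "k \<in> {1..n}"
  shows "(\<forall>A. A \<subseteq> {1..n} \<longrightarrow> (if \<phi> A then 1 else 0) = ord_stat n k (indicator A))
     \<longleftrightarrow> (\<forall>A. A \<subseteq> {1..n} \<longrightarrow> (\<phi> A \<longleftrightarrow> order_stat_system n k A))"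
  using ord_stat_indicator[OF assms] unfolding order_stat_system_def by auto

lemma I_BP_entropy_zero_iff:
  assumes n2: "n \<ge> 2" and sc: "semicoherent n \<phi>" and lt: "lifetimes M n X"
    and q_pos: "\<forall>i\<in>{1..n}. \<forall>A. A \<subseteq> {1..n} - {i} \<longrightarrow> q_j M n X i A > 0"
  shows "entropy_n n (I_BP M n \<phi> X) = 0 \<longleftrightarrow> (\<exists>j\<in>{1..n}. \<forall>A. A \<subseteq> {1..n} \<longrightarrow> (\<phi> A \<longleftrightarrow> j \<in> A))"
proof -
  interpret prob_space M using lt unfolding lifetimes_def by blast
  have X_meas: "\<And>i. i \<in> {1..n} \<Longrightarrow> X i \<in> borel_measurable M"
    and ties: "\<And>i k. i \<in> {1..n} \<Longrightarrow> k \<in> {1..n} \<Longrightarrow> i \<noteq> k \<Longrightarrow> prob {\<omega>\<in>space M. X i \<omega> = X k \<omega>} = 0"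
    using lt unfolding lifetimes_def by auto
  define T where "T \<omega> = path_value n \<phi> (\<lambda>i. X i \<omega>)" for \<omega>
  define B where "B j = {\<omega>\<in>space M. T \<omega> = X j \<omega>}" for j
  have B_event: "B j \<in> events" if "j \<in> {1..n}" for j
    unfolding B_def T_def using lifetime_match_event[OF X_meas X_meas[OF that]] .
  have "I_BP M n \<phi> X = (\<lambda>j. prob (B j))"
    unfolding I_BP_def B_def T_def lifetime_path_value[OF sc lt] ..
  then have "entropy_n n (I_BP M n \<phi> X) = 0 \<longleftrightarrow> (\<forall>j\<in>{1..n}. prob (B j) = 0 \<or> prob (B j) = 1)"
    using entropy_n_prob_zero_iff[OF n2] by simp
  also have "\<dots> \<longleftrightarrow> (\<exists>j\<in>{1..n}. \<forall>A. A \<subseteq> {1..n} \<longrightarrow> (\<phi> A \<longleftrightarrow> j \<in> A))"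
  proof
    assume trivial: "\<forall>j\<in>{1..n}. prob (B j) = 0 \<or> prob (B j) = 1"
    have "space M \<subseteq> (\<Union>j\<in>{1..n}. B j)"
    proof
      fix \<omega> assume "\<omega> \<in> space M"
      moreover obtain j where "j \<in> {1..n}" "T \<omega> = X j \<omega>"
        using path_value_component[OF sc] unfolding T_def by blast
      ultimately show "\<omega> \<in> (\<Union>j\<in>{1..n}. B j)" unfolding B_def by blast
    qed
    then obtain j where j: "j \<in> {1..n}" "prob (B j) = 1"
      using exists_prob_one[of "{1..n}" B] B_event trivial by auto
    have "\<phi> A \<longleftrightarrow> j \<in> A" if A: "A \<subseteq> {1..n}" for A
    proof -
      have agree: "path_value n \<phi> (\<lambda>i. X i \<omega>) = path_value n (\<lambda>A. j \<in> A) (\<lambda>i. X i \<omega>)"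
        if "\<omega> \<in> B j" for \<omega>
        using that path_value_dictator[OF j(1)] unfolding B_def T_def by simp
      define F where "F = {\<omega>\<in>space M. (\<forall>i\<in>{1..n} - (A - {j} \<union> {j}). X i \<omega> < X j \<omega>)
                                       \<and> (\<forall>l\<in>A - {j}. X j \<omega> < X l \<omega>)}"
      have "measure M F = q_j M n X j (A - {j})" unfolding F_def q_j_def ..
      moreover have "A - {j} \<subseteq> {1..n} - {j}" using A by blast
      ultimately have F_pos: "measure M F > 0" using q_pos j(1) by simp
      have F_sep: "\<forall>i\<in>{1..n} - A. \<forall>l\<in>A. X i \<omega> < X l \<omega>" if "\<omega> \<in> F" for \<omega>
        using that unfolding F_def by (intro q_j_event_separated[where n=n and j=j]) auto
      show ?thesis by (rule agree_on_separated_set[OF sc dictator_semicoherent[OF j(1)] A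
            B_event[OF j(1)] j(2) agree F_pos F_sep])
    qed
    then show "\<exists>j\<in>{1..n}. \<forall>A. A \<subseteq> {1..n} \<longrightarrow> (\<phi> A \<longleftrightarrow> j \<in> A)" using j(1) by blast
  next
    assume "\<exists>j\<in>{1..n}. \<forall>A. A \<subseteq> {1..n} \<longrightarrow> (\<phi> A \<longleftrightarrow> j \<in> A)"
    then obtain j where j: "j \<in> {1..n}" "\<forall>A. A \<subseteq> {1..n} \<longrightarrow> (\<phi> A \<longleftrightarrow> j \<in> A)" by blast
    have T_eq: "T \<omega> = X j \<omega>" if "\<omega> \<in> space M" for \<omega>
      unfolding T_def using path_value_cong[of n \<phi> "\<lambda>A. j \<in> A"] j path_value_dictator by simp
    from no_ties_ae[OF X_meas ties] obtain N where N_event: "N \<in> events"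
      and N: "prob N = 0 \<and> (\<forall>\<omega>\<in>space M - N. inj_on (\<lambda>i. X i \<omega>) {1..n})" ..
    show "\<forall>j\<in>{1..n}. prob (B j) = 0 \<or> prob (B j) = 1"
      unfolding B_def by (rule prob_match_zero_one[OF j(1) T_eq N_event conjunct1[OF N] conjunct2[OF N, rule_format] B_event[unfolded B_def]])
  qed
  finally show ?thesis .
qed

lemma signature_entropy_zero_iff:
  assumes n2: "n \<ge> 2" and sc: "semicoherent n \<phi>" and lt: "lifetimes M n X"
    and q_pos: "\<forall>A. A \<subseteq> {1..n} \<longrightarrow> q M n X A > 0"
  shows "entropy_n n (signature M n \<phi> X) = 0 \<longleftrightarrow>
    (\<exists>k\<in>{1..n}. \<forall>A. A \<subseteq> {1..n} \<longrightarrow> (\<phi> A \<longleftrightarrow> order_stat_system n k A))"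
proof -
  interpret prob_space M using lt unfolding lifetimes_def by blast
  have X_meas: "\<And>i. i \<in> {1..n} \<Longrightarrow> X i \<in> borel_measurable M"
    and ties: "\<And>i k. i \<in> {1..n} \<Longrightarrow> k \<in> {1..n} \<Longrightarrow> i \<noteq> k \<Longrightarrow> prob {\<omega>\<in>space M. X i \<omega> = X k \<omega>} = 0"
    using lt unfolding lifetimes_def by auto
  define T where "T \<omega> = path_value n \<phi> (\<lambda>i. X i \<omega>)" for \<omega>
  define Y where "Y k \<omega> = ord_stat n k (\<lambda>i. X i \<omega>)" for k \<omega>
  define B where "B k = {\<omega>\<in>space M. T \<omega> = Y k \<omega>}" for k
  have B_event: "B k \<in> events" if "k \<in> {1..n}" for k
    unfolding B_def T_def Y_def using lifetime_match_event[OF X_meas ord_stat_measurable[OF that X_meas]] .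
  have "signature M n \<phi> X = (\<lambda>k. prob (B k))"
    unfolding signature_def B_def T_def Y_def lifetime_path_value[OF sc lt] ..
  then have "entropy_n n (signature M n \<phi> X) = 0 \<longleftrightarrow> (\<forall>k\<in>{1..n}. prob (B k) = 0 \<or> prob (B k) = 1)"
    using entropy_n_prob_zero_iff[OF n2] by simp
  also have "\<dots> \<longleftrightarrow> (\<exists>k\<in>{1..n}. \<forall>A. A \<subseteq> {1..n} \<longrightarrow> (\<phi> A \<longleftrightarrow> order_stat_system n k A))"
  proof
    assume trivial: "\<forall>k\<in>{1..n}. prob (B k) = 0 \<or> prob (B k) = 1"
    have "space M \<subseteq> (\<Union>k\<in>{1..n}. B k)"
    proof
      fix \<omega> assume "\<omega> \<in> space M"
      obtain j where "j \<in> {1..n}" "T \<omega> = X j \<omega>"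
        using path_value_component[OF sc] unfolding T_def by blast
      then have "T \<omega> \<in> (\<lambda>k. Y k \<omega>) ` {1..n}"
        unfolding Y_def ord_stat_image by simp
      with \<open>\<omega> \<in> space M\<close> show "\<omega> \<in> (\<Union>k\<in>{1..n}. B k)" unfolding B_def by blast
    qed
    then obtain k where k: "k \<in> {1..n}" "prob (B k) = 1"
      using exists_prob_one[of "{1..n}" B] B_event trivial by auto
    have "\<phi> A \<longleftrightarrow> order_stat_system n k A" if A: "A \<subseteq> {1..n}" for A
    proof -
      have agree: "path_value n \<phi> (\<lambda>i. X i \<omega>) = path_value n (order_stat_system n k) (\<lambda>i. X i \<omega>)"
        if "\<omega> \<in> B k" for \<omega>
        using that path_value_order_stat[OF k(1)] unfolding B_def T_def Y_def by simp
      define F where "F = {\<omega>\<in>space M. \<forall>i\<in>{1..n} - A. \<forall>l\<in>A. X i \<omega> < X l \<omega>}"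
      have F_pos: "measure M F > 0" using q_pos A unfolding F_def q_def by simp
      have F_sep: "\<forall>i\<in>{1..n} - A. \<forall>l\<in>A. X i \<omega> < X l \<omega>" if "\<omega> \<in> F" for \<omega>
        using that unfolding F_def by blast
      show ?thesis by (rule agree_on_separated_set[OF sc order_stat_system_semicoherent[OF k(1)] A
            B_event[OF k(1)] k(2) agree F_pos F_sep])
    qed
    then show "\<exists>k\<in>{1..n}. \<forall>A. A \<subseteq> {1..n} \<longrightarrow> (\<phi> A \<longleftrightarrow> order_stat_system n k A)"
      using k(1) by blast
  next
    assume "\<exists>k\<in>{1..n}. \<forall>A. A \<subseteq> {1..n} \<longrightarrow> (\<phi> A \<longleftrightarrow> order_stat_system n k A)"
    then obtain k where k: "k \<in> {1..n}" "\<forall>A. A \<subseteq> {1..n} \<longrightarrow> (\<phi> A \<longleftrightarrow> order_stat_system n k A)"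
      by blast
    have T_eq: "T \<omega> = Y k \<omega>" if "\<omega> \<in> space M" for \<omega>
      unfolding T_def Y_def using path_value_cong[of n \<phi> "order_stat_system n k"] k
        path_value_order_stat by simp
    from no_ties_ae[OF X_meas ties] obtain N where N_event: "N \<in> events"
      and N: "prob N = 0 \<and> (\<forall>\<omega>\<in>space M - N. inj_on (\<lambda>i. X i \<omega>) {1..n})" ..
    have Y_inj: "inj_on (\<lambda>l. Y l \<omega>) {1..n}" if "\<omega> \<in> space M - N" for \<omega>
      unfolding Y_def using ord_stat_distinct[OF conjunct2[OF N, rule_format, OF that]] by (meson inj_onI)
    show "\<forall>k\<in>{1..n}. prob (B k) = 0 \<or> prob (B k) = 1"
      unfolding B_def by (rule prob_match_zero_one[OF k(1) T_eq N_event conjunct1[OF N] Y_inj B_event[unfolded B_def]])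
  qed
  finally show ?thesis .
qed

theorem proposition15:
  fixes M :: "'a measure" and n :: nat and \<phi> :: "nat set \<Rightarrow> bool"
    and X :: "nat \<Rightarrow> 'a \<Rightarrow> real"
  assumes "n \<ge> 2"
    and "semicoherent n \<phi>"
    and "lifetimes M n X"
  shows "((\<forall>i\<in>{1..n}. \<forall>A. A \<subseteq> {1..n} - {i} \<longrightarrow> q_j M n X i A > 0) \<longrightarrow>
          (entropy_n n (I_BP M n \<phi> X) = 0 \<longleftrightarrow>
           (\<exists>j\<in>{1..n}. \<forall>A. A \<subseteq> {1..n} \<longrightarrow> (\<phi> A \<longleftrightarrow> j \<in> A))))
       \<and> ((\<forall>A. A \<subseteq> {1..n} \<longrightarrow> q M n X A > 0) \<longrightarrow>
          (entropy_n n (signature M n \<phi> X) = 0 \<longleftrightarrow>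
           (\<exists>k\<in>{1..n}. \<forall>A. A \<subseteq> {1..n} \<longrightarrow>
              (if \<phi> A then 1 else 0) = ord_stat n k (indicator A))))"
proof (intro conjI impI)
  assume "\<forall>i\<in>{1..n}. \<forall>A. A \<subseteq> {1..n} - {i} \<longrightarrow> q_j M n X i A > 0"
  then show "entropy_n n (I_BP M n \<phi> X) = 0 \<longleftrightarrow>
      (\<exists>j\<in>{1..n}. \<forall>A. A \<subseteq> {1..n} \<longrightarrow> (\<phi> A \<longleftrightarrow> j \<in> A))"
    by (rule I_BP_entropy_zero_iff[OF assms])
next
  assume "\<forall>A. A \<subseteq> {1..n} \<longrightarrow> q M n X A > 0"
  then have "entropy_n n (signature M n \<phi> X) = 0 \<longleftrightarrow>
      (\<exists>k\<in>{1..n}. \<forall>A. A \<subseteq> {1..n} \<longrightarrow> (\<phi> A \<longleftrightarrow> order_stat_system n k A))"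
    by (rule signature_entropy_zero_iff[OF assms])
  also have "\<dots> \<longleftrightarrow>
      (\<exists>k\<in>{1..n}. \<forall>A. A \<subseteq> {1..n} \<longrightarrow> (if \<phi> A then 1 else 0) = ord_stat n k (indicator A))"
    by (rule bex_cong[OF refl]) (rule order_stat_system_iff_indicator[symmetric])
  finally show "entropy_n n (signature M n \<phi> X) = 0 \<longleftrightarrow>
      (\<exists>k\<in>{1..n}. \<forall>A. A \<subseteq> {1..n} \<longrightarrow> (if \<phi> A then 1 else 0) = ord_stat n k (indicator A))" .
qed

end
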